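(* Let $N=(S,\pi,L_1,\dots,L_n,\mathtt{A}^d_1,\dots,\mathtt{A}^d_n,\nu)$ be a probabilistic algorithmic knowledge structure in which the knowledge algorithms $\mathtt{A}_1,\dots,\mathtt{A}_n$ are deterministic, i.e. for each $i$, $\mathtt{A}^d_i(\phi,\ell,s,v_i)=\mathtt{A}^d_i(\phi,\ell,s,v'_i)$ for all $\phi,\ell,s$ and all $v,v'\in V$; write $\mathtt{A}_i(\phi,\ell,s)$ for this common value. Let $M=(S,\pi,L_1,\dots,L_n,\mathtt{A}_1,\dots,\mathtt{A}_n)$. If there are no occurrences of $\Pr$ in the formula $\phi$, then for all $s\in S$ and all $v\in V$, $(N,s,v)\models\phi$ if and only if $(M,s)\models\phi$.
   Context: Fix agents $1,\dots,n$ and a set $\Phi$ of primitive propositions. Formulas: every $p\in\Phi$ is a formula; if $\phi,\psi$ are formulas then so are $\neg\phi$, $\phi\wedge\psi$, $K_i\phi$ and $X_i\phi$ ($i=1,\dots,n$), and $\Pr(\phi)\ge\alpha$ for real $\alpha$. A derandomizer is a tuple $v=(v_1,\dots,v_n)$ where each $v_i$ is a sequence of coin-toss outcomes (heads/tails); $V$ is the set of all derandomizers. A probabilistic algorithmic knowledge structure is $N=(S,\pi,L_1,\dots,L_n,\mathtt{A}^d_1,\dots,\mathtt{A}^d_n,\nu)$ where $S$ is a set of states, $\pi(s)$ is a truth assignment to $\Phi$ for each $s\in S$, each $L_i:S\to\mathcal{L}$ maps states to local states, each $\mathtt{A}^d_i$ is a deterministic function which on input a formula $\phi$, a local state $\ell$,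 a state $s$ and a coin sequence $v_i$ returns one of "Yes", "No", "?", and $\nu$ is a probability distribution on $V$ such that for all $i,\phi,s$ and each answer $a$, the set $\{v\in V: \mathtt{A}^d_i(\phi,L_i(s),s,v_i)=a\}$ is nonempty iff it has positive $\nu$-probability. Write $s\sim_i t$ iff $L_i(s)=L_i(t)$. Satisfaction at pairs $(s,v)$: $(N,s,v)\models p$ iff $\pi(s)(p)=\mathbf{true}$; $\neg,\wedge$ as usual; $(N,s,v)\models K_i\phi$ iff $(N,t,v')\models\phi$ for all $v'\in V$ and all $t\in S$ with $s\sim_i t$; $(N,s,v)\models X_i\phi$ iff $\mathtt{A}^d_i(\phi,L_i(s),s,v_i)=$"Yes"; $(N,s,v)\models\Pr(\phi)\ge\alpha$ iff $\nu(\{v'\in V:(N,s,v')\models\phi\})\ge\alpha$. An algorithmic knowledge structure is $M=(S,\pi,L_1,\dots,L_n,\mathtt{A}_1,\dots,\mathtt{A}_n)$ with each $\mathtt{A}_i$ a deterministic function of $(\phi,\ell,s)$ returning "Yes", "No" or "?"; for $\Pr$-free formulas, $(M,s)\models p$ iff $\pi(s)(p)=\mathbf{true}$, $\neg,\wedge$ as usual, $(M,s)\models K_i\phi$ iff $(M,t)\models\phi$ for all $t$ with $s\sim_i t$, and $(M,s)\models X_i\phi$ iff $\mathtt{A}_i(\phi,L_i(s),s)=$"Yes". *)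

theory Defs
  imports "HOL-Probability.Probability"
begin

datatype coin = Heads | Tails

datatype answer = Yes | No | Unknown

datatype ('p, 'i) fml =
    Prim 'p
  | Neg "('p, 'i) fml"
  | Conj "('p, 'i) fml" "('p, 'i) fml"
  | Kn 'i "('p, 'i) fml"
  | Xn 'i "('p, 'i) fml"
  | PrGe "('p, 'i) fml" real

type_synonym coinseq = "nat \<Rightarrow> coin"
type_synonym 'i derand = "'i \<Rightarrow> coinseq"

fun pr_free :: "('p, 'i) fml \<Rightarrow> bool" where
  "pr_free (Prim p) = True"
| "pr_free (Neg f) = pr_free f"
| "pr_free (Conj f g) = (pr_free f \<and> pr_free g)"
| "pr_free (Kn i f) = pr_free f"
| "pr_free (Xn i f) = pr_free f"
| "pr_free (PrGe f a) = False"

text \<open>The set of states S is the type 's. Satisfaction in a probabilistic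
  algorithmic knowledge structure N = (S, pi, L, Ad, nu) at a pair (s, v).\<close>
fun sat_N :: "('s \<Rightarrow> 'p \<Rightarrow> bool) \<Rightarrow> ('i \<Rightarrow> 's \<Rightarrow> 'l)
   \<Rightarrow> ('i \<Rightarrow> ('p, 'i) fml \<Rightarrow> 'l \<Rightarrow> 's \<Rightarrow> coinseq \<Rightarrow> answer)
   \<Rightarrow> 'i derand measure \<Rightarrow> 's \<Rightarrow> 'i derand \<Rightarrow> ('p, 'i) fml \<Rightarrow> bool" where
  "sat_N \<pi> L Ad \<nu> s v (Prim p) = \<pi> s p"
| "sat_N \<pi> L Ad \<nu> s v (Neg f) = (\<not> sat_N \<pi> L Ad \<nu> s v f)"
| "sat_N \<pi> L Ad \<nu> s v (Conj f g) = (sat_N \<pi> L Ad \<nu> s v f \<and> sat_N \<pi> L Ad \<nu> s v g)"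
| "sat_N \<pi> L Ad \<nu> s v (Kn i f) =
     (\<forall>t v'. L i s = L i t \<longrightarrow> sat_N \<pi> L Ad \<nu> t v' f)"
| "sat_N \<pi> L Ad \<nu> s v (Xn i f) = (Ad i f (L i s) s (v i) = Yes)"
| "sat_N \<pi> L Ad \<nu> s v (PrGe f a) =
     (measure \<nu> {v'. sat_N \<pi> L Ad \<nu> s v' f} \<ge> a)"

text \<open>Satisfaction in an algorithmic knowledge structure M = (S, pi, L, A),
  for Pr-free formulas (Pr-formulas are given the value False; they are
  not part of the language of M).\<close>
fun sat_M :: "('s \<Rightarrow> 'p \<Rightarrow> bool) \<Rightarrow> ('i \<Rightarrow> 's \<Rightarrow> 'l)
   \<Rightarrow> ('i \<Rightarrow> ('p, 'i) fml \<Rightarrow> 'l \<Rightarrow> 's \<Rightarrow> answer)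
   \<Rightarrow> 's \<Rightarrow> ('p, 'i) fml \<Rightarrow> bool" where
  "sat_M \<pi> L A s (Prim p) = \<pi> s p"
| "sat_M \<pi> L A s (Neg f) = (\<not> sat_M \<pi> L A s f)"
| "sat_M \<pi> L A s (Conj f g) = (sat_M \<pi> L A s f \<and> sat_M \<pi> L A s g)"
| "sat_M \<pi> L A s (Kn i f) = (\<forall>t. L i s = L i t \<longrightarrow> sat_M \<pi> L A t f)"
| "sat_M \<pi> L A s (Xn i f) = (A i f (L i s) s = Yes)"
| "sat_M \<pi> L A s (PrGe f a) = False"

definition pak_structure :: "('i \<Rightarrow> 's \<Rightarrow> 'l)
   \<Rightarrow> ('i \<Rightarrow> ('p, 'i) fml \<Rightarrow> 'l \<Rightarrow> 's \<Rightarrow> coinseq \<Rightarrow> answer)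
   \<Rightarrow> 'i derand measure \<Rightarrow> bool" where
  "pak_structure L Ad \<nu> \<longleftrightarrow>
     prob_space \<nu> \<and> space \<nu> = UNIV \<and>
     (\<forall>i f s a. {v. Ad i f (L i s) s (v i) = a} \<noteq> {} \<longleftrightarrow>
                 measure \<nu> {v. Ad i f (L i s) s (v i) = a} > 0)"

definition deterministic_alg ::
  "('i \<Rightarrow> ('p, 'i) fml \<Rightarrow> 'l \<Rightarrow> 's \<Rightarrow> coinseq \<Rightarrow> answer) \<Rightarrow> bool" where
  "deterministic_alg Ad \<longleftrightarrow>
     (\<forall>i f l s (v :: 'i derand) v'. Ad i f l s (v i) = Ad i f l s (v' i))"

text \<open>The common value A_i(phi, l, s) of a deterministic Ad_i.\<close>
definition det_part ::
  "('i \<Rightarrow> ('p, 'i) fml \<Rightarrow> 'l \<Rightarrow> 's \<Rightarrow> coinseq \<Rightarrow> answer)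
   \<Rightarrow> 'i \<Rightarrow> ('p, 'i) fml \<Rightarrow> 'l \<Rightarrow> 's \<Rightarrow> answer" where
  "det_part Ad i f l s = Ad i f l s (\<lambda>_. Heads)"

end

theory Submission
  imports Defs
begin

text \<open>Without Pr the measure nu is never consulted, and a deterministic algorithm
  ignores its coins.\<close>

lemma deterministic_alg_eq_det_part:
  assumes "deterministic_alg Ad"
  shows "Ad i f l s c = det_part Ad i f l s"
proof -
  have "\<forall>v v'. Ad i f l s (v i) = Ad i f l s (v' i)"
    using assms unfolding deterministic_alg_def by blast
  from this [rule_format, of "\<lambda>_. c" "\<lambda>_ _. Heads"] show ?thesis
    by (simp add: det_part_def)
qed

lemma sat_N_eq_sat_M_if_deterministic:
  assumes "deterministic_alg Ad" and "pr_free \<phi>"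
  shows "sat_N \<pi> L Ad \<nu> s v \<phi> \<longleftrightarrow> sat_M \<pi> L (det_part Ad) s \<phi>"
  using assms(2)
proof (induction \<phi> arbitrary: s v)
  case (Xn i f)
  show ?case
    using deterministic_alg_eq_det_part [OF assms(1), of i f "L i s" s "v i"] by simp
qed auto

theorem proposition3p1:
  fixes \<pi> :: "'s \<Rightarrow> 'p \<Rightarrow> bool"
    and L :: "'i \<Rightarrow> 's \<Rightarrow> 'l"
    and Ad :: "'i \<Rightarrow> ('p, 'i) fml \<Rightarrow> 'l \<Rightarrow> 's \<Rightarrow> coinseq \<Rightarrow> answer"
    and \<nu> :: "'i derand measure"
    and \<phi> :: "('p, 'i) fml"
  assumes "pak_structure L Ad \<nu>"
    and "deterministic_alg Ad"
    and "pr_free \<phi>"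
  shows "\<forall>s v. sat_N \<pi> L Ad \<nu> s v \<phi> \<longleftrightarrow> sat_M \<pi> L (det_part Ad) s \<phi>"
  using sat_N_eq_sat_M_if_deterministic [OF assms(2,3)] by blast

end
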